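(* Let $(\lambda,\boldsymbol p)$ and $(\lambda',\boldsymbol p')$ be two distinct elements of $\nabla$ with $(\lambda',\boldsymbol p')\ge(\lambda,\boldsymbol p)$ componentwise (i.e. $\lambda'\ge\lambda$ and $p'_i\ge p_i$ for all $i$). If $k>m_+(\lambda',\boldsymbol p')$ and $\lambda'+p'_k>0$, then $f(k;\lambda',\boldsymbol p')>f(k;\lambda,\boldsymbol p)$.
   Context: $\nabla=\{(\lambda,\boldsymbol p):\lambda\ge0,\ 1\ge p_1\ge p_2\ge\dots\ge0,\ \sum_ip_i<\infty\}$. For $(\lambda,\boldsymbol p)\in\nabla$, $f(k;\lambda,\boldsymbol p)$ is the probability that $X+\sum_iB_i=k$ where $X\sim\mathrm{Poisson}(\lambda)$, $B_i\sim\mathrm{Bernoulli}(p_i)$ are independent, with $f(-1;\cdot)=0$. The leading mode $m_+(\lambda,\boldsymbol p)$ is the unique integer $k$ with $f(k-1;\lambda,\boldsymbol p)\le f(k;\lambda,\boldsymbol p)>f(k+1;\lambda,\boldsymbol p)$. $p'_k$ denotes the $k$-th component of $\boldsymbol p'$. *)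

theory Defs
  imports Complex_Main
begin

text \<open>Parameter space nabla. The sequence p is indexed from 0 here:
  p i stands for the paper's p_(i+1).\<close>
definition in_nabla :: "real \<Rightarrow> (nat \<Rightarrow> real) \<Rightarrow> bool" where
  "in_nabla lam p \<longleftrightarrow> lam \<ge> 0 \<and> p 0 \<le> 1 \<and> (\<forall>i. p (Suc i) \<le> p i)
     \<and> (\<forall>i. p i \<ge> 0) \<and> summable p"

text \<open>Law of X + B_0 + ... + B_(n-1), X ~ Poisson(lam), B_i ~ Bernoulli(p i), independent,
  computed by successive convolution.\<close>
fun fin_dist :: "real \<Rightarrow> (nat \<Rightarrow> real) \<Rightarrow> nat \<Rightarrow> nat \<Rightarrow> real" where
  "fin_dist lam p 0 k = exp (- lam) * lam ^ k / fact k"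
| "fin_dist lam p (Suc n) k =
     (1 - p n) * fin_dist lam p n k + (if k = 0 then 0 else p n * fin_dist lam p n (k - 1))"

text \<open>f(k; lam, p) = P(X + sum_i B_i = k), obtained as the limit of the finite partial sums
  (the infinite sum converges a.s. since sum p_i < infinity).\<close>
definition f :: "nat \<Rightarrow> real \<Rightarrow> (nat \<Rightarrow> real) \<Rightarrow> real" where
  "f k lam p = lim (\<lambda>n. fin_dist lam p n k)"

definition lead_mode :: "real \<Rightarrow> (nat \<Rightarrow> real) \<Rightarrow> nat" where
  "lead_mode lam p = (THE m. (if m = 0 then 0 else f (m - 1) lam p) \<le> f m lam p
                             \<and> f m lam p > f (Suc m) lam p)"

end

theory Submission
  imports Defs
begin

(* The law f(.; lam, p) is the limit of Poisson laws convolved with finitely many Bernoulli laws,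
   so it is log-concave without internal zeros.  A descent f (k + 1) <= f k at (lam', p') is
   inherited by every smaller parameter, because a Bernoulli or Poisson convolution of a
   log-concave sequence without a descent at k has no descent at k either.  The derivative of
   f (k + 1) in a Bernoulli parameter p_j is G k - G (k + 1), where G is the law without B_j, and
   its derivative in lam is f k - f (k + 1).  Above the leading mode of (lam', p') there is a
   strict descent at k - 1, so f k increases weakly along a monotone path from (lam, p) to
   (lam', p'), and strictly in its last step, which raises lam if lam < lam' and otherwise one
   coordinate p_j < p'_j. *)

section \<open>Bernoulli and Poisson convolutions\<close>

definition shift :: "(nat \<Rightarrow> real) \<Rightarrow> nat \<Rightarrow> real" where
  "shift a k = (if k = 0 then 0 else a (k - 1))"

definition bernoulli_conv :: "real \<Rightarrow> (nat \<Rightarrow> real) \<Rightarrow> nat \<Rightarrow> real" where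
  "bernoulli_conv q a k = (1 - q) * a k + q * shift a k"

definition poisson_seq :: "real \<Rightarrow> nat \<Rightarrow> real" where
  "poisson_seq l k = exp (- l) * l ^ k / fact k"

definition conv :: "(nat \<Rightarrow> real) \<Rightarrow> (nat \<Rightarrow> real) \<Rightarrow> nat \<Rightarrow> real" where
  "conv z a k = (\<Sum>i\<le>k. z i * a (k - i))"

definition prob_seq :: "(nat \<Rightarrow> real) \<Rightarrow> bool" where
  "prob_seq p \<longleftrightarrow> (\<forall>l. 0 \<le> p l \<and> p l \<le> 1)"

definition admissible :: "real \<Rightarrow> (nat \<Rightarrow> real) \<Rightarrow> bool" where
  "admissible lam p \<longleftrightarrow> 0 \<le> lam \<and> prob_seq p \<and> summable p"

lemma fin_dist_0: "fin_dist lam p 0 = poisson_seq lam"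
  by (simp add: fun_eq_iff poisson_seq_def)

lemma fin_dist_Suc: "fin_dist lam p (Suc n) = bernoulli_conv (p n) (fin_dist lam p n)"
  by (simp add: fun_eq_iff bernoulli_conv_def shift_def)

declare fin_dist.simps [simp del]

lemma fin_dist_cong: "(\<And>i. i < n \<Longrightarrow> p i = p' i) \<Longrightarrow> fin_dist lam p n = fin_dist lam p' n"
  by (induction n) (auto simp: fin_dist_Suc fin_dist_0)

lemma bernoulli_conv_commute: "bernoulli_conv q (bernoulli_conv r a) = bernoulli_conv r (bernoulli_conv q a)"
  by (auto simp: fun_eq_iff bernoulli_conv_def shift_def algebra_simps)

lemma bernoulli_conv_0 [simp]: "bernoulli_conv 0 a = a"
  by (simp add: fun_eq_iff bernoulli_conv_def)

lemma bernoulli_conv_1: "bernoulli_conv 1 a = shift a"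
  by (simp add: fun_eq_iff bernoulli_conv_def)

lemma fin_dist_fun_upd:
  "j < n \<Longrightarrow> fin_dist lam (p(j := q)) n = bernoulli_conv q (fin_dist lam (p(j := 0)) n)"
proof (induction n)
  case (Suc n)
  show ?case
  proof (cases "j = n")
    case True
    have e: "fin_dist lam (p(j := r)) n = fin_dist lam p n" for r
      by (rule fin_dist_cong) (simp add: True)
    show ?thesis
      unfolding fin_dist_Suc e by (simp add: True)
  next
    case False
    with Suc show ?thesis by (simp add: fin_dist_Suc bernoulli_conv_commute)
  qed
qed simp

lemma shift_nonneg: "(\<And>i. 0 \<le> a i) \<Longrightarrow> 0 \<le> shift a k"
  by (simp add: shift_def)

lemma sum_shift: "(\<Sum>k\<le>K. shift a k) = (\<Sum>k<K. a k)"
  by (induction K) (auto simp: shift_def)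

lemma bernoulli_conv_nonneg:
  "(\<And>i. 0 \<le> a i) \<Longrightarrow> 0 \<le> q \<Longrightarrow> q \<le> 1 \<Longrightarrow> 0 \<le> bernoulli_conv q a k"
  by (simp add: bernoulli_conv_def shift_nonneg)

lemma sum_bernoulli_conv:
  "(\<Sum>k\<le>K. bernoulli_conv q a k) = (1 - q) * (\<Sum>k\<le>K. a k) + q * (\<Sum>k<K. a k)"
  unfolding bernoulli_conv_def sum.distrib sum_distrib_left[symmetric] sum_shift ..

lemma poisson_seq_nonneg: "0 \<le> l \<Longrightarrow> 0 \<le> poisson_seq l k"
  by (simp add: poisson_seq_def)

lemma poisson_seq_0_pos: "0 < poisson_seq l 0"
  by (simp add: poisson_seq_def)

lemma sum_poisson_seq_le_1: "0 \<le> l \<Longrightarrow> (\<Sum>k\<le>K. poisson_seq l k) \<le> 1"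
proof -
  assume l: "0 \<le> l"
  have "(\<Sum>k\<le>K. l ^ k /\<^sub>R fact k) \<le> (\<Sum>k. l ^ k /\<^sub>R fact k)"
    by (rule sum_le_suminf) (use l summable_exp_generic[of l] in auto)
  then have "(\<Sum>k\<le>K. l ^ k / fact k) \<le> exp l"
    by (simp add: exp_def divide_inverse mult.commute)
  then have "exp (- l) * (\<Sum>k\<le>K. l ^ k / fact k) \<le> exp (- l) * exp l"
    by (intro mult_left_mono) auto
  then show ?thesis
    by (simp add: poisson_seq_def sum_distrib_left exp_minus field_simps)
qed

lemma fin_dist_nonneg: "0 \<le> lam \<Longrightarrow> prob_seq p \<Longrightarrow> 0 \<le> fin_dist lam p n k"
  by (induction n arbitrary: k)
    (auto simp: fin_dist_0 fin_dist_Suc poisson_seq_nonneg prob_seq_def intro: bernoulli_conv_nonneg)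

lemma sum_fin_dist_le_1: "0 \<le> lam \<Longrightarrow> prob_seq p \<Longrightarrow> (\<Sum>k\<le>K. fin_dist lam p n k) \<le> 1"
proof (induction n arbitrary: K)
  case 0
  then show ?case by (simp add: fin_dist_0 sum_poisson_seq_le_1)
next
  case (Suc n)
  have q: "0 \<le> p n" "p n \<le> 1"
    using Suc.prems by (auto simp: prob_seq_def)
  have "(\<Sum>k<K. fin_dist lam p n k) \<le> (\<Sum>k\<le>K. fin_dist lam p n k)"
    by (rule sum_mono2) (use fin_dist_nonneg[OF Suc.prems] in auto)
  then have "(\<Sum>k<K. fin_dist lam p n k) \<le> 1"
    using Suc.IH[OF Suc.prems, of K] by linarith
  then have "(1 - p n) * (\<Sum>k\<le>K. fin_dist lam p n k) + p n * (\<Sum>k<K. fin_dist lam p n k)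
      \<le> (1 - p n) * 1 + p n * 1"
    using Suc.IH[OF Suc.prems] q by (intro add_mono mult_left_mono) auto
  then show ?case
    by (simp add: fin_dist_Suc sum_bernoulli_conv)
qed

lemma fin_dist_le_1:
  assumes "0 \<le> lam" "prob_seq p"
  shows "fin_dist lam p n k \<le> 1"
proof -
  have "fin_dist lam p n k \<le> (\<Sum>i\<le>k. fin_dist lam p n i)"
    by (rule member_le_sum) (use fin_dist_nonneg[OF assms] in auto)
  also have "\<dots> \<le> 1"
    by (rule sum_fin_dist_le_1[OF assms])
  finally show ?thesis .
qed

section \<open>Log-concave sequences\<close>

definition log_concave_seq :: "(nat \<Rightarrow> real) \<Rightarrow> bool" where
  "log_concave_seq a \<longleftrightarrow> (\<forall>i. 0 \<le> a i) \<and> (\<forall>i. a i * a (Suc (Suc i)) \<le> (a (Suc i))\<^sup>2) \<and>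
     (\<forall>i j l. i \<le> j \<longrightarrow> j \<le> l \<longrightarrow> 0 < a i \<longrightarrow> 0 < a l \<longrightarrow> 0 < a j)"

lemma log_concave_seqI:
  assumes "\<And>i. 0 \<le> a i" "\<And>i. a i * a (Suc (Suc i)) \<le> (a (Suc i))\<^sup>2"
    and "\<And>i j l. i \<le> j \<Longrightarrow> j \<le> l \<Longrightarrow> 0 < a i \<Longrightarrow> 0 < a l \<Longrightarrow> 0 < a j"
  shows "log_concave_seq a"
  using assms by (simp add: log_concave_seq_def)

lemma
  assumes "log_concave_seq a"
  shows log_concave_seq_nonneg: "0 \<le> a i"
    and log_concave_seq_ineq: "a i * a (Suc (Suc i)) \<le> (a (Suc i))\<^sup>2"
    and log_concave_seq_pos_between: "i \<le> j \<Longrightarrow> j \<le> l \<Longrightarrow> 0 < a i \<Longrightarrow> 0 < a l \<Longrightarrow> 0 < a j"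
  using assms by (auto simp: log_concave_seq_def)

(* x, y, z, w stand for four consecutive terms a (i - 1), a i, a (i + 1), a (i + 2). *)
lemma log_concave_mixture_ineq:
  fixes x y z w q :: real
  assumes "0 \<le> x" "0 \<le> y" "0 \<le> z" "0 \<le> w" "y * w \<le> z\<^sup>2" "x * z \<le> y\<^sup>2"
    and "0 < x \<Longrightarrow> 0 < w \<Longrightarrow> 0 < y \<and> 0 < z" "0 \<le> q" "q \<le> 1"
  shows "((1 - q) * y + q * x) * ((1 - q) * w + q * z) \<le> ((1 - q) * z + q * y)\<^sup>2"
proof -
  have xw: "x * w \<le> y * z"
  proof (cases "0 < y \<and> 0 < z")
    case True
    have "(x * w) * (y * z) = (x * z) * (y * w)" by (simp add: algebra_simps)
    also have "\<dots> \<le> y\<^sup>2 * z\<^sup>2" using assms by (intro mult_mono) auto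
    also have "\<dots> = (y * z) * (y * z)" by (simp add: power2_eq_square algebra_simps)
    finally show ?thesis using True by (simp add: mult_le_cancel_right)
  next
    case False
    then have "x = 0 \<or> w = 0" using assms by force
    then show ?thesis using assms by auto
  qed
  have "((1 - q) * z + q * y)\<^sup>2 - ((1 - q) * y + q * x) * ((1 - q) * w + q * z)
      = (1 - q)\<^sup>2 * (z\<^sup>2 - y * w) + q\<^sup>2 * (y\<^sup>2 - x * z) + q * (1 - q) * (y * z - x * w)"
    by (simp add: power2_eq_square algebra_simps)
  also have "\<dots> \<ge> 0"
    using assms xw by (intro add_nonneg_nonneg mult_nonneg_nonneg) auto
  finally show ?thesis by simp
qed

lemma log_concave_bernoulli_conv_ineq:
  assumes a: "log_concave_seq a" and q: "0 \<le> q" "q \<le> 1"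
  shows "bernoulli_conv q a i * bernoulli_conv q a (Suc (Suc i)) \<le> (bernoulli_conv q a (Suc i))\<^sup>2"
proof -
  have "shift a i * a (Suc i) \<le> (a i)\<^sup>2"
    using log_concave_seq_ineq[OF a, of "i - 1"] by (cases i) (auto simp: shift_def)
  moreover have "0 < a i \<and> 0 < a (Suc i)" if "0 < shift a i" "0 < a (Suc (Suc i))"
    using that log_concave_seq_pos_between[OF a, of "i - 1" _ "Suc (Suc i)"]
    by (cases i) (auto simp: shift_def)
  moreover have "bernoulli_conv q a i = (1 - q) * a i + q * shift a i"
    "bernoulli_conv q a (Suc i) = (1 - q) * a (Suc i) + q * a i"
    "bernoulli_conv q a (Suc (Suc i)) = (1 - q) * a (Suc (Suc i)) + q * a (Suc i)"
    by (simp_all add: bernoulli_conv_def shift_def)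
  ultimately show ?thesis
    using log_concave_mixture_ineq[of "shift a i" "a i" "a (Suc i)" "a (Suc (Suc i))" q] q
    by (simp add: shift_nonneg log_concave_seq_nonneg[OF a] log_concave_seq_ineq[OF a])
qed

lemma bernoulli_conv_pos_iff:
  assumes "\<And>i. 0 \<le> a i" "0 \<le> q" "q < 1"
  shows "0 < bernoulli_conv q a k \<longleftrightarrow> 0 < a k \<or> (0 < q \<and> 0 < shift a k)"
  using assms(2,3) assms(1)[of k] shift_nonneg[of a k, OF assms(1)]
  by (auto simp: bernoulli_conv_def add_pos_nonneg add_nonneg_pos zero_less_mult_iff mult_le_0_iff)

lemma bernoulli_conv_pos_between:
  assumes a: "log_concave_seq a" and q: "0 \<le> q" "q \<le> 1"
    and ijl: "i \<le> j" "j \<le> l" and pos: "0 < bernoulli_conv q a i" "0 < bernoulli_conv q a l"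
  shows "0 < bernoulli_conv q a j"
proof (cases "q = 1")
  case True
  then have "0 < a (i - 1)" "0 < a (l - 1)" "0 < i"
    using pos ijl by (auto simp: bernoulli_conv_1 shift_def split: if_splits)
  then have "0 < a (j - 1)"
    using log_concave_seq_pos_between[OF a, of "i - 1" "j - 1" "l - 1"] ijl by simp
  then show ?thesis
    using True ijl \<open>0 < i\<close> by (simp add: bernoulli_conv_1 shift_def)
next
  case False
  note pos_iff = bernoulli_conv_pos_iff[OF log_concave_seq_nonneg[OF a] q(1)] False q(2)
  obtain i0 where "i0 \<le> j" "0 < a i0"
  proof (cases "0 < a i")
    case True
    with ijl(1) that show ?thesis by blast
  next
    case False
    with pos(1) have "0 < a (i - 1)"
      using pos_iff by (simp add: shift_def split: if_splits)
    with ijl(1) that[of "i - 1"] show ?thesis by simp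
  qed
  obtain l0 where "l \<le> Suc l0" "l0 \<le> l" "0 < a l0"
  proof (cases "0 < a l")
    case True
    with that[of l] show ?thesis by simp
  next
    case False
    with pos(2) have "0 < a (l - 1)" "0 < l"
      using pos_iff by (simp_all add: shift_def split: if_splits)
    with that[of "l - 1"] show ?thesis by simp
  qed
  show ?thesis
  proof (cases "j = l")
    case False
    with \<open>l \<le> Suc l0\<close> ijl(2) have "j \<le> l0" by simp
    then have "0 < a j"
      using log_concave_seq_pos_between[OF a \<open>i0 \<le> j\<close>] \<open>0 < a i0\<close> \<open>0 < a l0\<close> by blast
    then show ?thesis using pos_iff by simp
  qed (use pos(2) in simp)
qed

lemma log_concave_bernoulli_conv:
  assumes "log_concave_seq a" "0 \<le> q" "q \<le> 1"
  shows "log_concave_seq (bernoulli_conv q a)"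
proof (rule log_concave_seqI)
  show "0 \<le> bernoulli_conv q a i" for i
    using assms by (intro bernoulli_conv_nonneg) (auto simp: log_concave_seq_nonneg)
qed (use assms log_concave_bernoulli_conv_ineq bernoulli_conv_pos_between in blast)+

lemma log_concave_poisson_seq:
  assumes "0 \<le> l"
  shows "log_concave_seq (poisson_seq l)"
proof (rule log_concave_seqI)
  show "poisson_seq l i * poisson_seq l (Suc (Suc i)) \<le> (poisson_seq l (Suc i))\<^sup>2" for i
  proof -
    have "fact (Suc i) * fact (Suc i) = real (Suc i) * (real (Suc i) * fact i * fact i)"
      "fact i * fact (Suc (Suc i)) = real (Suc (Suc i)) * (real (Suc i) * fact i * fact i)"
      by (simp_all add: algebra_simps)
    then have "fact (Suc i) * fact (Suc i) \<le> (fact i * fact (Suc (Suc i)) :: real)"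
      by (simp only:) (intro mult_right_mono; simp)
    moreover have powers: "l ^ i * l ^ Suc (Suc i) = l ^ Suc i * l ^ Suc i"
      by (simp add: power_add[symmetric])
    ultimately have "(exp (- l))\<^sup>2 * (l ^ i * l ^ Suc (Suc i)) / (fact i * fact (Suc (Suc i)))
        \<le> (exp (- l))\<^sup>2 * (l ^ Suc i * l ^ Suc i) / (fact (Suc i) * fact (Suc i))"
      unfolding powers using assms
      by (intro divide_left_mono mult_nonneg_nonneg mult_pos_pos) (simp_all del: fact_Suc)
    then show ?thesis
      by (simp add: poisson_seq_def power2_eq_square mult_ac del: fact_Suc)
  qed
  show "0 < poisson_seq l j" if "i \<le> j" "j \<le> k" "0 < poisson_seq l i" "0 < poisson_seq l k" for i j k
    using assms that by (cases "l = 0") (auto simp: poisson_seq_def power_0_left split: if_splits)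
qed (use assms poisson_seq_nonneg in auto)

lemma log_concave_fin_dist: "0 \<le> lam \<Longrightarrow> prob_seq p \<Longrightarrow> log_concave_seq (fin_dist lam p n)"
  by (induction n)
    (auto simp: fin_dist_0 fin_dist_Suc log_concave_poisson_seq prob_seq_def
      intro!: log_concave_bernoulli_conv)

lemma log_concave_shift_le_below:
  assumes a: "log_concave_seq a" and "shift a k \<le> a k" "0 < a k" "j \<le> k"
  shows "shift a j \<le> a j"
  using \<open>j \<le> k\<close>
proof (induction j rule: inc_induct)
  case base
  show ?case by fact
next
  case (step n)
  show ?case
  proof (cases n)
    case (Suc m)
    have "a m \<le> a n"
    proof (cases "0 < a n")
      case True
      have "0 < a (Suc n)"
        using log_concave_seq_pos_between[OF a _ _ True \<open>0 < a k\<close>] step.hyps by simp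
      have "a m * a (Suc n) \<le> (a n)\<^sup>2"
        using log_concave_seq_ineq[OF a, of m] Suc by simp
      also have "\<dots> \<le> a n * a (Suc n)"
        using step.IH True by (simp add: power2_eq_square shift_def)
      finally show ?thesis
        using \<open>0 < a (Suc n)\<close> by simp
    next
      case False
      then have "a m = 0"
        using log_concave_seq_pos_between[OF a, of m n k] \<open>0 < a k\<close> step.hyps Suc
          log_concave_seq_nonneg[OF a, of m] by fastforce
      then show ?thesis
        using log_concave_seq_nonneg[OF a] by simp
    qed
    then show ?thesis by (simp add: shift_def Suc)
  qed (simp add: shift_def log_concave_seq_nonneg[OF a])
qed

lemma log_concave_strict_decrease_propagates:
  assumes a: "log_concave_seq a" and "a (Suc m) < a m" and pos: "\<And>j. m \<le> j \<Longrightarrow> j \<le> k \<Longrightarrow> 0 < a j"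
    and "m \<le> j" "Suc j \<le> k"
  shows "a (Suc j) < a j"
  using \<open>m \<le> j\<close> \<open>Suc j \<le> k\<close>
proof (induction j rule: dec_induct)
  case (step j)
  have "(a (Suc j))\<^sup>2 < a j * a (Suc j)"
    using mult_strict_right_mono[OF step.IH pos[of "Suc j"]] step by (simp add: power2_eq_square)
  then have "a j * a (Suc (Suc j)) < a j * a (Suc j)"
    using log_concave_seq_ineq[OF a, of j] by linarith
  then show ?case
    using pos[of j] step by simp
qed (use assms in simp)

definition bernoulli_seq :: "real \<Rightarrow> nat \<Rightarrow> real" where
  "bernoulli_seq q i = (if i = 0 then 1 - q else if i = 1 then q else 0)"

lemma conv_shift: "conv z (shift a) k = shift (conv z a) k"
proof (cases k)
  case (Suc k')
  have "conv z (shift a) (Suc k') = (\<Sum>i\<le>k'. z i * shift a (Suc k' - i)) + z (Suc k') * shift a 0"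
    by (simp add: conv_def)
  also have "\<dots> = (\<Sum>i\<le>k'. z i * a (k' - i))"
    by (auto simp: shift_def Suc_diff_le intro!: sum.cong)
  finally show ?thesis
    using Suc by (simp add: shift_def conv_def)
qed (simp add: conv_def shift_def)

lemma conv_shift_left: "conv (shift z) a k = shift (conv z a) k"
proof (cases k)
  case (Suc k')
  have "conv (shift z) a (Suc k') = shift z 0 * a (Suc k') + (\<Sum>i\<le>k'. shift z (Suc i) * a (k' - i))"
    unfolding conv_def sum.atMost_Suc_shift by simp
  then show ?thesis
    using Suc by (simp add: shift_def conv_def)
qed (simp add: conv_def shift_def)

lemma conv_add: "conv z (\<lambda>j. c * a j + d * b j) k = c * conv z a k + d * conv z b k"
  by (simp add: conv_def sum.distrib sum_distrib_left algebra_simps)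

lemma conv_diff: "conv z (\<lambda>j. a j - b j) k = conv z a k - conv z b k"
  by (simp add: conv_def sum_subtractf algebra_simps)

lemma conv_bernoulli_conv: "conv z (bernoulli_conv q a) k = bernoulli_conv q (conv z a) k"
  using conv_add[of z "1 - q" a q "shift a" k]
  by (simp add: bernoulli_conv_def[abs_def] conv_shift)

lemma bernoulli_conv_eq_conv: "bernoulli_conv q a = conv (bernoulli_seq q) a"
proof
  fix k
  show "bernoulli_conv q a k = conv (bernoulli_seq q) a k"
  proof (cases k)
    case (Suc k')
    have "conv (bernoulli_seq q) a (Suc k') = (\<Sum>i\<in>{0, 1}. bernoulli_seq q i * a (Suc k' - i))"
      unfolding conv_def by (rule sum.mono_neutral_right) (auto simp: bernoulli_seq_def)
    then have "conv (bernoulli_seq q) a (Suc k') = (1 - q) * a (Suc k') + q * a k'"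
      by (simp add: bernoulli_seq_def)
    then show ?thesis
      using Suc by (simp add: bernoulli_conv_def shift_def)
  qed (simp add: conv_def bernoulli_seq_def bernoulli_conv_def shift_def)
qed

lemma conv_ge_head:
  assumes "\<And>i. 0 \<le> z i" "\<And>j. j \<le> k \<Longrightarrow> 0 \<le> a j"
  shows "z 0 * a k \<le> conv z a k"
  using member_le_sum[of 0 "{..k}" "\<lambda>i. z i * a (k - i)"] assms by (simp add: conv_def)

lemma poisson_seq_add: "poisson_seq (l + d) k = conv (poisson_seq d) (poisson_seq l) k"
proof -
  have summand: "poisson_seq d i * poisson_seq l (k - i)
      = exp (- (l + d)) / fact k * (of_nat (k choose i) * d ^ i * l ^ (k - i))"
    if "i \<le> k" for i
  proof -
    have "of_nat (k choose i) = (fact k / (fact i * fact (k - i)) :: real)"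
      using binomial_fact[OF that] by simp
    moreover have "exp (- (l + d)) = exp (- d) * exp (- l)"
      by (simp add: exp_add[symmetric])
    ultimately show ?thesis
      by (simp add: poisson_seq_def)
  qed
  have "conv (poisson_seq d) (poisson_seq l) k
      = (\<Sum>i\<le>k. exp (- (l + d)) / fact k * (of_nat (k choose i) * d ^ i * l ^ (k - i)))"
    unfolding conv_def by (rule sum.cong) (auto simp: summand)
  also have "\<dots> = exp (- (l + d)) / fact k * (d + l) ^ k"
    by (simp add: binomial_ring sum_distrib_left)
  finally show ?thesis
    by (simp add: poisson_seq_def add.commute)
qed

lemma fin_dist_add_rate: "fin_dist (lam + d) p n = conv (poisson_seq d) (fin_dist lam p n)"
proof (induction n)
  case 0
  show ?case by (simp add: fin_dist_0 fun_eq_iff poisson_seq_add)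
next
  case (Suc n)
  show ?case
    unfolding fin_dist_Suc Suc.IH by (simp add: fun_eq_iff conv_bernoulli_conv)
qed

section \<open>Descents\<close>

lemma conv_increment_ge:
  assumes a: "log_concave_seq a" and z: "\<And>i. 0 \<le> z i"
    and "a k \<le> a (Suc k)" "0 < a (Suc k)"
  shows "z 0 * (a (Suc k) - a k) \<le> conv z a (Suc k) - conv z a k"
proof -
  have "shift a (Suc k) \<le> a (Suc k)"
    using assms(3) by (simp add: shift_def)
  then have "0 \<le> a j - shift a j" if "j \<le> Suc k" for j
    using log_concave_shift_le_below[OF a _ assms(4) that] by simp
  then have "z 0 * (a (Suc k) - shift a (Suc k)) \<le> conv z (\<lambda>j. a j - shift a j) (Suc k)"
    by (intro conv_ge_head z)
  also have "\<dots> = conv z a (Suc k) - conv z a k"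
    unfolding conv_diff conv_shift by (simp add: shift_def)
  finally show ?thesis
    by (simp add: shift_def)
qed

lemma strict_descent_of_conv:
  assumes a: "log_concave_seq a" and z: "\<And>i. 0 \<le> z i"
    and pos: "0 < a (Suc k)" and desc: "conv z a (Suc k) < conv z a k"
  shows "a (Suc k) < a k"
proof (rule ccontr)
  assume "\<not> a (Suc k) < a k"
  then have "z 0 * (a (Suc k) - a k) \<le> conv z a (Suc k) - conv z a k"
    by (intro conv_increment_ge[OF a z _ pos]) simp
  moreover have "0 \<le> z 0 * (a (Suc k) - a k)"
    using \<open>\<not> a (Suc k) < a k\<close> z by simp
  ultimately show False
    using desc by simp
qed

lemma strict_descent_of_bernoulli_conv:
  assumes a: "log_concave_seq a" and q: "0 \<le> q" "q \<le> 1"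
    and pos: "0 < bernoulli_conv q a (Suc k)"
    and desc: "bernoulli_conv q a (Suc k) < bernoulli_conv q a k"
  shows "a (Suc k) < a k"
proof (cases "0 < a (Suc k)")
  case True
  show ?thesis
    by (rule strict_descent_of_conv[OF a _ True])
      (use q desc in \<open>simp_all add: bernoulli_conv_eq_conv bernoulli_seq_def\<close>)
next
  case False
  then have "a (Suc k) = 0"
    using log_concave_seq_nonneg[OF a, of "Suc k"] by simp
  with pos q show ?thesis
    by (simp add: bernoulli_conv_def shift_def zero_less_mult_iff)
qed

(* The positivity clause excludes the vacuous descent 0 = a (Suc k) = a k below the support,
   which smaller parameters need not inherit. *)
definition descends_at :: "nat \<Rightarrow> (nat \<Rightarrow> real) \<Rightarrow> bool" where
  "descends_at k a \<longleftrightarrow> a (Suc k) \<le> a k \<and> (0 < a k \<or> (\<forall>l\<ge>k. a l = 0))"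

lemma descends_at_of_conv:
  assumes a: "log_concave_seq a" and z: "\<And>i. 0 \<le> z i" "0 < z 0"
    and desc: "descends_at k (conv z a)"
  shows "descends_at k a"
proof -
  have nonneg: "0 \<le> a i" for i
    by (rule log_concave_seq_nonneg[OF a])
  have "a (Suc k) \<le> a k"
  proof (rule ccontr)
    assume "\<not> a (Suc k) \<le> a k"
    then have "z 0 * (a (Suc k) - a k) \<le> conv z a (Suc k) - conv z a k"
      using nonneg[of k] by (intro conv_increment_ge[OF a z(1)]) auto
    moreover have "0 < z 0 * (a (Suc k) - a k)"
      using \<open>\<not> a (Suc k) \<le> a k\<close> z(2) by simp
    ultimately show False
      using desc by (simp add: descends_at_def)
  qed
  moreover have "0 < a k \<or> (\<forall>l\<ge>k. a l = 0)"
  proof (rule ccontr)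
    assume "\<not> ?thesis"
    then obtain l where "k \<le> l" "0 < a l" "a k = 0"
      using nonneg[of k] nonneg by (auto simp: order.strict_iff_order)
    then have "a i = 0" if "i \<le> k" for i
      using that log_concave_seq_pos_between[OF a that \<open>k \<le> l\<close> _ \<open>0 < a l\<close>] nonneg[of i]
      by fastforce
    then have "conv z a k = 0"
      by (simp add: conv_def)
    then have "conv z a l = 0"
      using desc \<open>k \<le> l\<close> by (simp add: descends_at_def)
    moreover have "z 0 * a l \<le> conv z a l"
      by (intro conv_ge_head z nonneg)
    ultimately show False
      using mult_pos_pos[OF z(2) \<open>0 < a l\<close>] by linarith
  qed
  ultimately show ?thesis
    by (simp add: descends_at_def)
qed

lemma descends_at_Suc:
  assumes a: "log_concave_seq a" and "descends_at k a"
  shows "descends_at (Suc k) a"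
proof (cases "0 < a (Suc k)")
  case True
  then have "0 < a k"
    using assms(2) by (simp add: descends_at_def)
  have "a k * a (Suc (Suc k)) \<le> (a (Suc k))\<^sup>2"
    by (rule log_concave_seq_ineq[OF a])
  also have "\<dots> \<le> a k * a (Suc k)"
    using assms(2) True by (simp add: descends_at_def power2_eq_square)
  finally show ?thesis
    using True \<open>0 < a k\<close> by (simp add: descends_at_def)
next
  case False
  then have zero: "a (Suc k) = 0"
    using log_concave_seq_nonneg[OF a, of "Suc k"] by simp
  have "a l = 0" if "Suc k \<le> l" for l
  proof (cases "0 < a k")
    case True
    then show ?thesis
      using log_concave_seq_pos_between[OF a _ that True] zero
        log_concave_seq_nonneg[OF a, of l] by fastforce
  next
    case False
    then show ?thesis
      using assms(2) that by (simp add: descends_at_def)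
  qed
  then show ?thesis
    by (simp add: descends_at_def)
qed

lemma descends_at_of_shift:
  assumes a: "log_concave_seq a" and desc: "descends_at k (shift a)"
  shows "descends_at k a"
proof (cases k)
  case 0
  then have "\<forall>l. shift a l = 0"
    using desc by (auto simp: descends_at_def shift_def[of a 0])
  then have "a l = 0" for l
    by (metis diff_Suc_1 nat.distinct(1) shift_def)
  then show ?thesis
    by (simp add: descends_at_def)
next
  case (Suc k')
  have "descends_at k' a"
    unfolding descends_at_def
  proof (intro conjI)
    have "\<forall>l\<ge>k'. a l = 0" if "\<forall>l\<ge>Suc k'. shift a l = 0"
      using that spec[of _ "Suc _"] by (auto simp: shift_def)
    then show "0 < a k' \<or> (\<forall>l\<ge>k'. a l = 0)"
      using desc Suc by (auto simp: descends_at_def shift_def)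
  qed (use desc Suc in \<open>simp add: descends_at_def shift_def\<close>)
  then show ?thesis
    using descends_at_Suc[OF a] Suc by simp
qed

lemma descends_at_of_bernoulli_conv:
  assumes a: "log_concave_seq a" and q: "0 \<le> q" "q \<le> 1"
    and desc: "descends_at k (bernoulli_conv q a)"
  shows "descends_at k a"
proof (cases "q = 1")
  case True
  then show ?thesis
    using descends_at_of_shift[OF a] desc by (simp add: bernoulli_conv_1)
next
  case False
  show ?thesis
  proof (rule descends_at_of_conv[OF a])
    show "0 \<le> bernoulli_seq q i" for i
      using q by (simp add: bernoulli_seq_def)
    show "0 < bernoulli_seq q 0"
      using q False by (simp add: bernoulli_seq_def)
  qed (use desc in \<open>simp add: bernoulli_conv_eq_conv\<close>)
qed

lemma descends_at_mixture:
  assumes "\<And>i. 0 \<le> a i" "\<And>i. 0 \<le> b i" "0 \<le> t" "t \<le> 1"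
    and "descends_at k a" "descends_at k b"
  shows "descends_at k (\<lambda>i. (1 - t) * a i + t * b i)"
proof -
  have "(1 - t) * a (Suc k) + t * b (Suc k) \<le> (1 - t) * a k + t * b k"
    using assms by (intro add_mono mult_left_mono) (auto simp: descends_at_def)
  moreover have "0 < (1 - t) * a k + t * b k \<or> (\<forall>l\<ge>k. (1 - t) * a l + t * b l = 0)"
  proof (cases "0 < (1 - t) * a k + t * b k")
    case False
    then have "(1 - t) * a k = 0" "t * b k = 0"
      using assms(1,2)[of k] assms(3,4) by (smt (verit) mult_nonneg_nonneg)+
    then have "(1 - t) * a l = 0 \<and> t * b l = 0" if "k \<le> l" for l
      using assms(5,6) that by (auto simp: descends_at_def)
    then show ?thesis by (simp del: mult_eq_0_iff)
  qed simp
  ultimately show ?thesis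
    by (simp add: descends_at_def)
qed

lemma descends_at_bernoulli_conv_mono:
  assumes a: "log_concave_seq a" and q: "0 \<le> q'" "q' \<le> q" "q \<le> 1"
    and desc: "descends_at k (bernoulli_conv q a)"
  shows "descends_at k (bernoulli_conv q' a)"
proof (cases "q = 0")
  case True
  with q desc show ?thesis by simp
next
  case False
  have mixture: "bernoulli_conv q' a = (\<lambda>i. (1 - q' / q) * a i + q' / q * bernoulli_conv q a i)"
    using False by (simp add: fun_eq_iff bernoulli_conv_def field_simps)
  show ?thesis
    unfolding mixture
  proof (rule descends_at_mixture)
    show "descends_at k a"
      by (rule descends_at_of_bernoulli_conv[OF a _ _ desc]) (use q in auto)
  qed (use q False desc log_concave_seq_nonneg[OF a] bernoulli_conv_nonneg in auto)
qed

lemma replace_coordinates_induct: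
  fixes n :: nat
  assumes "P p"
    and step: "\<And>r j. j < n \<Longrightarrow> (\<And>x. r x = p x \<or> r x = q x) \<Longrightarrow> r j = p j \<Longrightarrow> P r \<Longrightarrow> P (r(j := q j))"
  shows "P (\<lambda>x. if x < n then q x else p x)"
proof -
  have "j \<le> n \<Longrightarrow> P (\<lambda>x. if x < j then q x else p x)" for j
  proof (induction j)
    case (Suc j)
    have "P ((\<lambda>x. if x < j then q x else p x)(j := q j))"
      using Suc by (intro step) auto
    moreover have "(\<lambda>x. if x < j then q x else p x)(j := q j) = (\<lambda>x. if x < Suc j then q x else p x)"
      by (auto simp: fun_eq_iff)
    ultimately show ?case
      by simp
  qed (use assms(1) in simp)
  then show ?thesis by simp
qed

lemma prob_seq_fun_upd: "prob_seq p \<Longrightarrow> 0 \<le> q \<Longrightarrow> q \<le> 1 \<Longrightarrow> prob_seq (p(j := q))"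
  by (simp add: prob_seq_def)

lemma descends_at_fin_dist_mono:
  assumes lam: "0 \<le> lam" "lam \<le> lam'" and p: "prob_seq p" "prob_seq p'" "\<And>l. p l \<le> p' l"
    and desc: "descends_at k (fin_dist lam' p' n)"
  shows "descends_at k (fin_dist lam p n)"
proof -
  have "descends_at k (fin_dist lam' (\<lambda>x. if x < n then p x else p' x) n)"
  proof (rule replace_coordinates_induct[where P = "\<lambda>r. descends_at k (fin_dist lam' r n)"])
    fix r j
    assume j: "j < n" and r: "\<And>x. r x = p' x \<or> r x = p x" "r j = p' j"
      and desc_r: "descends_at k (fin_dist lam' r n)"
    let ?G = "fin_dist lam' (r(j := 0)) n"
    have "prob_seq r"
      using p r(1) unfolding prob_seq_def by metis
    then have G: "log_concave_seq ?G"
      using lam by (intro log_concave_fin_dist prob_seq_fun_upd) auto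
    have "fin_dist lam' r n = bernoulli_conv (p' j) ?G"
      using fin_dist_fun_upd[OF j, of lam' r "p' j"] r(2)[symmetric] by simp
    with desc_r have "descends_at k (bernoulli_conv (p' j) ?G)"
      by simp
    moreover have "0 \<le> p j" "p j \<le> p' j" "p' j \<le> 1"
      using p by (auto simp: prob_seq_def)
    ultimately have "descends_at k (bernoulli_conv (p j) ?G)"
      using descends_at_bernoulli_conv_mono[OF G] by blast
    then show "descends_at k (fin_dist lam' (r(j := p j)) n)"
      unfolding fin_dist_fun_upd[OF j, of lam' r "p j"] .
  qed (use desc in simp)
  moreover have "fin_dist lam' (\<lambda>x. if x < n then p x else p' x) n = conv (poisson_seq (lam' - lam)) (fin_dist lam p n)"
    using fin_dist_add_rate[of lam "lam' - lam" p n] fin_dist_cong[of n "\<lambda>x. if x < n then p x else p' x" p]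
    by simp
  ultimately have "descends_at k (conv (poisson_seq (lam' - lam)) (fin_dist lam p n))"
    by simp
  moreover have "0 \<le> poisson_seq (lam' - lam) i" for i
    using lam by (simp add: poisson_seq_nonneg)
  ultimately show ?thesis
    using descends_at_of_conv[OF log_concave_fin_dist[OF lam(1) p(1)]] poisson_seq_0_pos by blast
qed

lemma fin_dist_mono_params:
  assumes lam: "0 \<le> lam" "lam \<le> lam'"
    and p: "prob_seq p" "prob_seq p'" "\<And>l. p l \<le> q l" "\<And>l. q l \<le> p' l"
    and desc: "descends_at k (fin_dist lam' p' n)"
  shows "fin_dist lam p n (Suc k) \<le> fin_dist lam q n (Suc k)"
proof -
  have "fin_dist lam p n (Suc k) \<le> fin_dist lam (\<lambda>x. if x < n then q x else p x) n (Suc k)"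
  proof (rule replace_coordinates_induct[where P = "\<lambda>r. fin_dist lam p n (Suc k) \<le> fin_dist lam r n (Suc k)"])
    fix r j
    assume j: "j < n" and r: "\<And>x. r x = p x \<or> r x = q x" "r j = p j"
      and le_r: "fin_dist lam p n (Suc k) \<le> fin_dist lam r n (Suc k)"
    let ?G = "fin_dist lam (r(j := 0)) n"
    have r_le: "0 \<le> r x" "r x \<le> p' x" for x
      using p r(1)[of x] order_trans[OF p(3) p(4)] order_trans[of 0 "p x" "q x"]
      by (auto simp: prob_seq_def)
    have "prob_seq (r(j := 0))" "(r(j := 0)) x \<le> p' x" for x
      using r_le order_trans[OF r_le(2)] p(2) by (simp_all add: prob_seq_def)
    then have "descends_at k ?G"
      by (intro descends_at_fin_dist_mono[OF lam _ p(2) _ desc])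
    then have G_desc: "?G (Suc k) \<le> ?G k"
      by (simp add: descends_at_def)
    have upd: "fin_dist lam (r(j := s)) n (Suc k) = ?G (Suc k) + s * (?G k - ?G (Suc k))" for s
      unfolding fin_dist_fun_upd[OF j, of lam r s] by (simp add: bernoulli_conv_def shift_def algebra_simps)
    have "fin_dist lam (r(j := p j)) n (Suc k) \<le> fin_dist lam (r(j := q j)) n (Suc k)"
      unfolding upd[of "p j"] upd[of "q j"] using G_desc p(3)[of j] by (simp add: mult_right_mono)
    then show "fin_dist lam p n (Suc k) \<le> fin_dist lam (r(j := q j)) n (Suc k)"
      using le_r r(2) by (simp add: fun_upd_idem)
  qed simp
  moreover have "fin_dist lam (\<lambda>x. if x < n then q x else p x) n = fin_dist lam q n"
    by (rule fin_dist_cong) simp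
  ultimately show ?thesis
    by simp
qed

section \<open>The limit law\<close>

lemma admissible_fun_upd:
  assumes "admissible lam p" "0 \<le> q" "q \<le> 1"
  shows "admissible lam (p(j := q))"
proof -
  have "summable (p(j := q))"
  proof (rule summable_comparison_test'[of p "Suc j"])
    show "norm ((p(j := q)) n) \<le> p n" if "Suc j \<le> n" for n
      using assms that by (auto simp: admissible_def prob_seq_def)
  qed (use assms in \<open>simp add: admissible_def\<close>)
  then show ?thesis
    using assms by (simp add: admissible_def prob_seq_fun_upd)
qed

lemma fin_dist_LIMSEQ:
  assumes "admissible lam p"
  shows "(\<lambda>n. fin_dist lam p n k) \<longlonglongrightarrow> f k lam p"
proof -
  have lam: "0 \<le> lam" and p: "prob_seq p" "summable p"
    using assms by (auto simp: admissible_def)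
  define d where "d n = fin_dist lam p (Suc n) k - fin_dist lam p n k" for n
  have "norm (d n) \<le> p n" for n
  proof -
    have "d n = p n * (shift (fin_dist lam p n) k - fin_dist lam p n k)"
      by (simp add: d_def fin_dist_Suc bernoulli_conv_def algebra_simps)
    moreover have "\<bar>shift (fin_dist lam p n) k - fin_dist lam p n k\<bar> \<le> 1"
      using fin_dist_nonneg[OF lam p(1), of n] fin_dist_le_1[OF lam p(1), of n]
      by (simp add: shift_def abs_le_iff) (smt (verit))
    moreover have "0 \<le> p n"
      using p(1) by (simp add: prob_seq_def)
    ultimately show ?thesis
      by (simp add: abs_mult mult_left_le)
  qed
  then have "summable d"
    by (intro summable_comparison_test'[OF p(2), of 0]) auto
  then have "(\<lambda>n. fin_dist lam p 0 k + (\<Sum>i<n. d i)) \<longlonglongrightarrow> fin_dist lam p 0 k + suminf d"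
    by (intro tendsto_add tendsto_const summable_LIMSEQ)
  moreover have "fin_dist lam p 0 k + (\<Sum>i<n. d i) = fin_dist lam p n k" for n
    unfolding d_def using sum_lessThan_telescope[of "\<lambda>i. fin_dist lam p i k" n] by simp
  ultimately have "convergent (\<lambda>n. fin_dist lam p n k)"
    by (auto simp: convergent_def)
  then show ?thesis
    by (simp add: convergent_LIMSEQ_iff f_def)
qed

lemma f_nonneg: "admissible lam p \<Longrightarrow> 0 \<le> f k lam p"
  by (rule LIMSEQ_le_const[OF fin_dist_LIMSEQ]) (auto simp: admissible_def intro: fin_dist_nonneg)

lemma sum_f_le_1: "admissible lam p \<Longrightarrow> (\<Sum>k\<le>K. f k lam p) \<le> 1"
  by (rule LIMSEQ_le_const2[OF tendsto_sum[OF fin_dist_LIMSEQ]])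
    (auto simp: admissible_def intro: sum_fin_dist_le_1)

(* All Bernoulli variables with index in {n..<N} vanish with probability at least
   1 - (\<Sum>l\<in>{n..<N}. p l). *)
lemma fin_dist_mult_partial_tail_le:
  assumes lam: "0 \<le> lam" and p: "prob_seq p" and "n \<le> N"
  shows "fin_dist lam p n i * (1 - (\<Sum>l\<in>{n..<N}. p l)) \<le> fin_dist lam p N i"
  using \<open>n \<le> N\<close>
proof (induction N rule: dec_induct)
  case (step N)
  let ?c = "fin_dist lam p n i" and ?S = "\<Sum>l\<in>{n..<N}. p l"
  have p01: "0 \<le> p x" "p x \<le> 1" for x
    using p by (auto simp: prob_seq_def)
  have "?c * (1 - (\<Sum>l\<in>{n..<Suc N}. p l)) \<le> (1 - p N) * (?c * (1 - ?S))"
    using step.hyps fin_dist_nonneg[OF lam p] p01 sum_nonneg[of "{n..<N}" p]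
    by (simp add: algebra_simps)
  also have "\<dots> \<le> (1 - p N) * fin_dist lam p N i"
    using step.IH p01[of N] by (intro mult_left_mono) auto
  also have "\<dots> \<le> fin_dist lam p (Suc N) i"
    using fin_dist_nonneg[OF lam p] p01[of N]
    by (simp add: fin_dist_Suc bernoulli_conv_def shift_def)
  finally show ?case .
qed simp

lemma fin_dist_mult_tail_le_f:
  assumes adm: "admissible lam p"
  shows "fin_dist lam p n i * (1 - (\<Sum>l. p (l + n))) \<le> f i lam p"
proof (rule LIMSEQ_le_const[OF fin_dist_LIMSEQ[OF adm]], intro exI allI impI)
  fix N
  assume "n \<le> N"
  have lam: "0 \<le> lam" and p: "prob_seq p" "summable p"
    using adm by (auto simp: admissible_def)
  have "(\<Sum>l\<in>{n..<N}. p l) = (\<Sum>l<N - n. p (l + n))"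
    using \<open>n \<le> N\<close> by (simp add: sum.shift_bounds_nat_ivl[of p 0 n "N - n", symmetric] lessThan_atLeast0)
  also have "\<dots> \<le> (\<Sum>l. p (l + n))"
    by (rule sum_le_suminf) (use p in \<open>auto simp: summable_iff_shift prob_seq_def\<close>)
  finally have "fin_dist lam p n i * (1 - (\<Sum>l. p (l + n)))
      \<le> fin_dist lam p n i * (1 - (\<Sum>l\<in>{n..<N}. p l))"
    using fin_dist_nonneg[OF lam p(1)] by (intro mult_left_mono) auto
  also have "\<dots> \<le> fin_dist lam p N i"
    by (rule fin_dist_mult_partial_tail_le[OF lam p(1) \<open>n \<le> N\<close>])
  finally show "fin_dist lam p n i * (1 - (\<Sum>l. p (l + n))) \<le> fin_dist lam p N i" .
qed

lemma eventually_f_pos_of_fin_dist_pos: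
  assumes "admissible lam p"
  shows "eventually (\<lambda>n. \<forall>i. 0 < fin_dist lam p n i \<longrightarrow> 0 < f i lam p) sequentially"
proof -
  obtain N where "\<forall>n\<ge>N. norm (\<Sum>l. p (l + n)) < 1"
    using suminf_exist_split[of 1 p] assms by (auto simp: admissible_def)
  then have tail: "(\<Sum>l. p (l + n)) < 1" if "N \<le> n" for n
    using that by fastforce
  show ?thesis
    unfolding eventually_sequentially
  proof (intro exI allI impI)
    fix n i
    assume "N \<le> n" "0 < fin_dist lam p n i"
    then have "0 < fin_dist lam p n i * (1 - (\<Sum>l. p (l + n)))"
      using tail by simp
    also have "\<dots> \<le> f i lam p"
      by (rule fin_dist_mult_tail_le_f[OF assms])
    finally show "0 < f i lam p" .
  qed
qed

lemma log_concave_f: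
  assumes adm: "admissible lam p"
  shows "log_concave_seq (\<lambda>k. f k lam p)"
proof (rule log_concave_seqI)
  have lam: "0 \<le> lam" and p: "prob_seq p"
    using adm by (auto simp: admissible_def)
  show "f i lam p * f (Suc (Suc i)) lam p \<le> (f (Suc i) lam p)\<^sup>2" for i
    by (rule LIMSEQ_le[OF tendsto_mult[OF fin_dist_LIMSEQ fin_dist_LIMSEQ]
          tendsto_power[OF fin_dist_LIMSEQ]])
      (use adm log_concave_seq_ineq[OF log_concave_fin_dist[OF lam p]] in auto)
  show "0 < f j lam p" if ijl: "i \<le> j" "j \<le> l" "0 < f i lam p" "0 < f l lam p" for i j l
  proof -
    have "eventually (\<lambda>n. 0 < fin_dist lam p n i \<and> 0 < fin_dist lam p n l
        \<and> (\<forall>i. 0 < fin_dist lam p n i \<longrightarrow> 0 < f i lam p)) sequentially"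
      using order_tendstoD(1)[OF fin_dist_LIMSEQ[OF adm] ijl(3)]
        order_tendstoD(1)[OF fin_dist_LIMSEQ[OF adm] ijl(4)]
        eventually_f_pos_of_fin_dist_pos[OF adm]
      by eventually_elim blast
    then obtain n where n: "0 < fin_dist lam p n i" "0 < fin_dist lam p n l"
      "\<And>i. 0 < fin_dist lam p n i \<Longrightarrow> 0 < f i lam p"
      using eventually_happens' by force
    show ?thesis
      using log_concave_seq_pos_between[OF log_concave_fin_dist[OF lam p] ijl(1,2) n(1,2)] n(3)
      by blast
  qed
qed (use adm f_nonneg in blast)

lemma f_fun_upd:
  assumes adm: "admissible lam p" and q: "0 \<le> q" "q \<le> 1"
  shows "f k lam (p(j := q)) = bernoulli_conv q (\<lambda>k. f k lam (p(j := 0))) k"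
proof -
  have adm0: "admissible lam (p(j := 0))"
    by (rule admissible_fun_upd[OF adm]) auto
  have "(\<lambda>n. shift (fin_dist lam (p(j := 0)) n) k) \<longlonglongrightarrow> shift (\<lambda>k. f k lam (p(j := 0))) k"
    by (cases k) (simp_all add: shift_def fin_dist_LIMSEQ[OF adm0])
  then have "(\<lambda>n. bernoulli_conv q (fin_dist lam (p(j := 0)) n) k)
      \<longlonglongrightarrow> bernoulli_conv q (\<lambda>k. f k lam (p(j := 0))) k"
    unfolding bernoulli_conv_def by (intro tendsto_intros fin_dist_LIMSEQ[OF adm0])
  moreover have "eventually (\<lambda>n. bernoulli_conv q (fin_dist lam (p(j := 0)) n) k
      = fin_dist lam (p(j := q)) n k) sequentially"
    unfolding eventually_sequentially
    by (rule exI[of _ "Suc j"]) (simp add: fin_dist_fun_upd[where q = q])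
  ultimately have "(\<lambda>n. fin_dist lam (p(j := q)) n k) \<longlonglongrightarrow> bernoulli_conv q (\<lambda>k. f k lam (p(j := 0))) k"
    by (rule Lim_transform_eventually)
  then show ?thesis
    using LIMSEQ_unique[OF fin_dist_LIMSEQ[OF admissible_fun_upd[OF adm q]]] by blast
qed

lemma f_add_rate:
  assumes adm: "admissible lam p" and "0 \<le> d"
  shows "f k (lam + d) p = conv (poisson_seq d) (\<lambda>k. f k lam p) k"
proof -
  have "admissible (lam + d) p"
    using assms by (simp add: admissible_def)
  moreover have "(\<lambda>n. fin_dist (lam + d) p n k) \<longlonglongrightarrow> conv (poisson_seq d) (\<lambda>k. f k lam p) k"
    unfolding fin_dist_add_rate conv_def by (intro tendsto_intros fin_dist_LIMSEQ[OF adm])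
  ultimately show ?thesis
    using LIMSEQ_unique[OF fin_dist_LIMSEQ] by blast
qed

lemma eventually_fin_dist_descends:
  assumes adm: "admissible lam p" and "f (Suc k) lam p < f k lam p"
  shows "eventually (\<lambda>n. descends_at k (fin_dist lam p n)) sequentially"
proof -
  have "(\<lambda>n. fin_dist lam p n k - fin_dist lam p n (Suc k)) \<longlonglongrightarrow> f k lam p - f (Suc k) lam p"
    by (intro tendsto_diff fin_dist_LIMSEQ adm)
  then have "eventually (\<lambda>n. 0 < fin_dist lam p n k - fin_dist lam p n (Suc k)) sequentially"
    by (rule order_tendstoD(1)) (use assms(2) in simp)
  then show ?thesis
  proof eventually_elim
    case (elim n)
    then show ?case
      using adm fin_dist_nonneg[of lam p n "Suc k"] by (simp add: descends_at_def admissible_def)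
  qed
qed

lemma f_mono_params:
  assumes adm: "admissible lam p" "admissible lam q" "admissible lam' p'"
    and "lam \<le> lam'" "\<And>l. p l \<le> q l" "\<And>l. q l \<le> p' l"
    and desc: "f (Suc k) lam' p' < f k lam' p'"
  shows "f (Suc k) lam p \<le> f (Suc k) lam q"
proof (rule LIMSEQ_le[OF fin_dist_LIMSEQ[OF adm(1)] fin_dist_LIMSEQ[OF adm(2)]])
  obtain N where "\<And>n. N \<le> n \<Longrightarrow> descends_at k (fin_dist lam' p' n)"
    using eventually_fin_dist_descends[OF adm(3) desc] by (auto simp: eventually_sequentially)
  moreover have "0 \<le> lam" "prob_seq p" "prob_seq p'"
    using adm by (simp_all add: admissible_def)
  ultimately show "\<exists>N. \<forall>n\<ge>N. fin_dist lam p n (Suc k) \<le> fin_dist lam q n (Suc k)"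
    using fin_dist_mono_params assms(4-6) by blast
qed

lemma fin_dist_pos_Suc:
  assumes "0 \<le> lam" "prob_seq p" "0 < fin_dist lam p n i"
  shows "0 < fin_dist lam p (Suc n) i \<or> 0 < fin_dist lam p (Suc n) (Suc i)"
proof (cases "p n < 1")
  case True
  have "0 \<le> p n * shift (fin_dist lam p n) i"
    using assms fin_dist_nonneg[OF assms(1,2)] by (simp add: prob_seq_def shift_nonneg)
  then show ?thesis
    using True assms(3) by (simp add: fin_dist_Suc bernoulli_conv_def add_pos_nonneg)
next
  case False
  moreover have "p n \<le> 1"
    using assms(2) by (simp add: prob_seq_def)
  ultimately have "p n = 1"
    by simp
  then show ?thesis
    using assms(3) by (simp add: fin_dist_Suc bernoulli_conv_def shift_def)
qed

lemma fin_dist_diagonal_pos: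
  assumes lam: "0 \<le> lam" and p: "prob_seq p" and pos: "\<And>l. l < n \<Longrightarrow> 0 < p l"
  shows "0 < fin_dist lam p n n"
  using pos
proof (induction n)
  case 0
  then show ?case by (simp add: fin_dist_0 poisson_seq_def)
next
  case (Suc n)
  have "0 \<le> (1 - p n) * fin_dist lam p n (Suc n)"
    using p fin_dist_nonneg[OF lam p] by (simp add: prob_seq_def)
  moreover have "0 < p n * fin_dist lam p n n"
    using Suc by simp
  ultimately show ?case
    by (simp add: fin_dist_Suc bernoulli_conv_def shift_def)
qed

lemma eventually_fin_dist_pos_beyond:
  assumes adm: "admissible lam p" and pos: "0 < lam \<or> (\<forall>l<k. 0 < p l)"
  shows "eventually (\<lambda>n. \<exists>i\<ge>k. 0 < fin_dist lam p n i) sequentially"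
proof -
  have lam: "0 \<le> lam" and p: "prob_seq p"
    using adm by (auto simp: admissible_def)
  obtain n0 where n0: "\<exists>i\<ge>k. 0 < fin_dist lam p n0 i"
  proof (cases "0 < lam")
    case True
    then have "0 < fin_dist lam p 0 k"
      by (simp add: fin_dist_0 poisson_seq_def)
    with that show ?thesis by blast
  next
    case False
    with pos have "0 < fin_dist lam p k k"
      by (intro fin_dist_diagonal_pos[OF lam p]) simp
    with that show ?thesis by blast
  qed
  have "\<exists>i\<ge>k. 0 < fin_dist lam p n i" if "n0 \<le> n" for n
    using that
  proof (induction n rule: dec_induct)
    case (step n)
    then obtain i where "k \<le> i" "0 < fin_dist lam p n i"
      by blast
    with fin_dist_pos_Suc[OF lam p this(2)] show ?case
      using le_SucI by blast
  qed (use n0 in blast)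
  then show ?thesis
    by (auto simp: eventually_sequentially)
qed

lemma f_pos_beyond:
  assumes adm: "admissible lam p" and "0 < lam \<or> (\<forall>l<k. 0 < p l)"
  shows "\<exists>i\<ge>k. 0 < f i lam p"
proof -
  have "eventually (\<lambda>n. (\<exists>i\<ge>k. 0 < fin_dist lam p n i)
      \<and> (\<forall>i. 0 < fin_dist lam p n i \<longrightarrow> 0 < f i lam p)) sequentially"
    using eventually_fin_dist_pos_beyond[OF assms] eventually_f_pos_of_fin_dist_pos[OF adm]
    by (rule eventually_conj)
  then obtain n where "\<exists>i\<ge>k. 0 < fin_dist lam p n i" "\<forall>i. 0 < fin_dist lam p n i \<longrightarrow> 0 < f i lam p"
    using eventually_happens' by force
  then show ?thesis
    by blast
qed

definition is_lead_mode :: "(nat \<Rightarrow> real) \<Rightarrow> nat \<Rightarrow> bool" where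
  "is_lead_mode a m \<longleftrightarrow> (if m = 0 then 0 else a (m - 1)) \<le> a m \<and> a m > a (Suc m)"

lemma lead_mode_eq: "lead_mode lam p = (THE m. is_lead_mode (\<lambda>k. f k lam p) m)"
  by (simp add: lead_mode_def is_lead_mode_def)

lemma ex_strict_decrease:
  fixes a :: "nat \<Rightarrow> real"
  assumes "\<And>i. 0 \<le> a i" "\<And>K. (\<Sum>k\<le>K. a k) \<le> 1" "0 < a i0"
  shows "\<exists>j. a (Suc j) < a j"
proof (rule ccontr)
  assume "\<not> ?thesis"
  then have "a i0 \<le> a j" if "i0 \<le> j" for j
    using lift_Suc_mono_le[of a, OF _ that] by (simp add: not_less)
  then have "(\<Sum>k\<in>{i0..<i0 + K}. a i0) \<le> (\<Sum>k\<in>{i0..<i0 + K}. a k)" for K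
    by (intro sum_mono) auto
  also have "(\<Sum>k\<in>{i0..<i0 + K}. a k) \<le> (\<Sum>k\<le>i0 + K. a k)" for K
    by (rule sum_mono2) (use assms(1) in auto)
  finally have "real K * a i0 \<le> 1" for K
    using assms(2) order_trans by fastforce
  moreover obtain K where "1 < real K * a i0"
    using ex_less_of_nat_mult[OF assms(3)] by blast
  ultimately show False
    by (meson not_le)
qed

lemma is_lead_mode_exists:
  assumes "\<And>i. 0 \<le> a i" "\<exists>j. a (Suc j) < a j"
  shows "\<exists>m. is_lead_mode a m"
proof -
  define m where "m = (LEAST j. a (Suc j) < a j)"
  have "a (Suc m) < a m"
    unfolding m_def by (rule LeastI_ex[OF assms(2)])
  moreover have "a (m - 1) \<le> a m" if "m \<noteq> 0"
    using not_less_Least[of "m - 1" "\<lambda>j. a (Suc j) < a j"] that by (simp add: m_def[symmetric])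
  ultimately show ?thesis
    unfolding is_lead_mode_def using assms(1) by (intro exI[of _ m]) auto
qed

lemma log_concave_decreasing_above_mode:
  assumes a: "log_concave_seq a" and mode: "is_lead_mode a m"
    and "m \<le> j" "j < i" "0 < a i"
  shows "0 < a (Suc j) \<and> a (Suc j) < a j"
proof -
  have "0 < a m"
    using mode log_concave_seq_nonneg[OF a, of "Suc m"] by (simp add: is_lead_mode_def)
  then have pos: "0 < a l" if "m \<le> l" "l \<le> i" for l
    using log_concave_seq_pos_between[OF a that] assms(5) by blast
  have "a (Suc m) < a m"
    using mode by (simp add: is_lead_mode_def)
  then have "a (Suc j) < a j"
    using log_concave_strict_decrease_propagates[OF a _ pos] assms(3,4) by simp
  with pos assms(3,4) show ?thesis
    by simp
qed

lemma log_concave_lead_mode_unique: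
  assumes a: "log_concave_seq a" and "is_lead_mode a m" "is_lead_mode a m'"
  shows "m = m'"
proof -
  have "\<not> m < m'" if m: "is_lead_mode a m" and m': "is_lead_mode a m'" for m m'
  proof
    assume "m < m'"
    have "0 < a m'"
      using m' log_concave_seq_nonneg[OF a, of "Suc m'"] by (simp add: is_lead_mode_def)
    then have "a (Suc (m' - 1)) < a (m' - 1)"
      using log_concave_decreasing_above_mode[OF a m, of "m' - 1" m'] \<open>m < m'\<close> by simp
    then show False
      using \<open>m < m'\<close> m' by (simp add: is_lead_mode_def)
  qed
  then show ?thesis
    using assms(2,3) by (meson linorder_neqE_nat)
qed

lemma is_lead_mode_lead_mode:
  assumes adm: "admissible lam p" and "0 < f i lam p"
  shows "is_lead_mode (\<lambda>k. f k lam p) (lead_mode lam p)"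
proof -
  have "\<exists>j. f (Suc j) lam p < f j lam p"
    by (rule ex_strict_decrease[OF f_nonneg[OF adm] sum_f_le_1[OF adm] assms(2)])
  then have "\<exists>!m. is_lead_mode (\<lambda>k. f k lam p) m"
    by (intro ex_ex1I is_lead_mode_exists[OF f_nonneg[OF adm]]
        log_concave_lead_mode_unique[OF log_concave_f[OF adm]])
  then show ?thesis
    unfolding lead_mode_eq by (rule theI')
qed

section \<open>Strict monotonicity\<close>

lemma poisson_seq_has_real_derivative:
  "((\<lambda>x. poisson_seq x i) has_real_derivative (shift (poisson_seq x) i - poisson_seq x i)) (at x)"
proof -
  have "((\<lambda>x. exp (- x) * x ^ i / fact i) has_real_derivative
      (- exp (- x)) * x ^ i / fact i + exp (- x) * (of_nat i * x ^ (i - 1)) / fact i) (at x)"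
    by (auto intro!: derivative_eq_intros simp: field_simps)
  moreover have "(- exp (- x)) * x ^ i / fact i + exp (- x) * (of_nat i * x ^ (i - 1)) / fact i
      = shift (poisson_seq x) i - poisson_seq x i"
  proof (cases i)
    case (Suc i')
    have "exp (- x) * (of_nat (Suc i') * x ^ i') / fact (Suc i') = exp (- x) * x ^ i' / fact i'"
      by (simp add: field_simps del: of_nat_Suc)
    then show ?thesis
      using Suc by (simp add: poisson_seq_def shift_def)
  qed (simp add: poisson_seq_def shift_def)
  ultimately show ?thesis
    unfolding poisson_seq_def by (rule DERIV_cong)
qed

lemma conv_poisson_has_real_derivative:
  "((\<lambda>x. conv (poisson_seq x) a k) has_real_derivative
     (shift (conv (poisson_seq x) a) k - conv (poisson_seq x) a k)) (at x)"
proof -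
  have "((\<lambda>x. \<Sum>i\<le>k. poisson_seq x i * a (k - i)) has_real_derivative
      (\<Sum>i\<le>k. (shift (poisson_seq x) i - poisson_seq x i) * a (k - i))) (at x)"
    by (intro DERIV_sum DERIV_cmult_right poisson_seq_has_real_derivative)
  moreover have "(\<Sum>i\<le>k. (shift (poisson_seq x) i - poisson_seq x i) * a (k - i))
      = shift (conv (poisson_seq x) a) k - conv (poisson_seq x) a k"
    using conv_shift_left[of "poisson_seq x" a k] by (simp add: conv_def algebra_simps sum_subtractf)
  ultimately show ?thesis
    unfolding conv_def by simp
qed

lemma f_pos_of_pos_rate:
  assumes adm: "admissible lam p" and "0 < lam'" and pos: "0 < f k lam p"
  shows "0 < f k lam' p"
proof -
  let ?B = "\<lambda>j. f j 0 p"
  have adm0: "admissible 0 p"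
    using adm by (simp add: admissible_def)
  have B: "0 \<le> ?B j" for j
    by (rule f_nonneg[OF adm0])
  have f_eq: "f j x p = conv (poisson_seq x) ?B j" if "0 \<le> x" for j x
    using f_add_rate[OF adm0 that] by simp
  have "conv (poisson_seq lam) ?B k \<noteq> 0"
    using pos adm f_eq[of lam k] by (simp add: admissible_def)
  then obtain i where i: "i \<le> k" "poisson_seq lam i * ?B (k - i) \<noteq> 0"
    unfolding conv_def by (rule sum.not_neutral_contains_not_neutral) simp
  then have "0 < ?B (k - i)"
    using B[of "k - i"] by (simp add: order.strict_iff_order)
  then have "0 < poisson_seq lam' i * ?B (k - i)"
    using \<open>0 < lam'\<close> by (simp add: poisson_seq_def)
  also have "\<dots> \<le> conv (poisson_seq lam') ?B k"
    unfolding conv_def using i(1) B \<open>0 < lam'\<close>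
    by (intro member_le_sum) (auto simp: poisson_seq_nonneg)
  finally show ?thesis
    using f_eq[of lam' k] \<open>0 < lam'\<close> by simp
qed

lemma f_strict_mono_rate:
  assumes adm: "admissible lam' p" and lam: "0 \<le> lam" "lam < lam'"
    and pos: "0 < f (Suc k) lam' p" and desc: "f (Suc k) lam' p < f k lam' p"
  shows "f (Suc k) lam p < f (Suc k) lam' p"
proof -
  let ?B = "\<lambda>j. f j 0 p"
  have adm0: "admissible 0 p"
    using adm by (simp add: admissible_def)
  have f_eq: "f j x p = conv (poisson_seq x) ?B j" if "0 \<le> x" for j x
    using f_add_rate[OF adm0 that] by simp
  obtain z where z: "lam < z" "z < lam'" and mvt:
    "conv (poisson_seq lam') ?B (Suc k) - conv (poisson_seq lam) ?B (Suc k)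
      = (lam' - lam) * (conv (poisson_seq z) ?B k - conv (poisson_seq z) ?B (Suc k))"
    using MVT2[OF lam(2) conv_poisson_has_real_derivative[of ?B "Suc k"]] by (auto simp: shift_def)
  have adm_z: "admissible z p"
    using adm0 z lam by (simp add: admissible_def)
  have pos_z: "0 < f (Suc k) z p"
    using f_pos_of_pos_rate[OF adm _ pos] z lam by simp
  have "f j lam' p = conv (poisson_seq (lam' - z)) (\<lambda>j. f j z p) j" for j
    using f_add_rate[OF adm_z, of "lam' - z"] z by simp
  with desc have "conv (poisson_seq (lam' - z)) (\<lambda>j. f j z p) (Suc k)
      < conv (poisson_seq (lam' - z)) (\<lambda>j. f j z p) k"
    by simp
  moreover have "0 \<le> poisson_seq (lam' - z) i" for i
    using z by (simp add: poisson_seq_nonneg)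
  ultimately have "f (Suc k) z p < f k z p"
    by (rule strict_descent_of_conv[OF log_concave_f[OF adm_z] _ pos_z, rotated])
  then have "0 < conv (poisson_seq lam') ?B (Suc k) - conv (poisson_seq lam) ?B (Suc k)"
    unfolding mvt using f_eq[of z k] f_eq[of z "Suc k"] z lam by simp
  then show ?thesis
    using f_eq[of lam' "Suc k"] f_eq[of lam "Suc k"] lam by simp
qed

lemma f_strict_mono_coordinate:
  assumes adm: "admissible lam p" and q: "0 \<le> q" "q < p j"
    and pos: "0 < f (Suc k) lam p" and desc: "f (Suc k) lam p < f k lam p"
  shows "f (Suc k) lam (p(j := q)) < f (Suc k) lam p"
proof -
  let ?G = "\<lambda>k. f k lam (p(j := 0))"
  have pj: "p j \<le> 1"
    using adm by (simp add: admissible_def prob_seq_def)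
  have G: "log_concave_seq ?G"
    by (rule log_concave_f[OF admissible_fun_upd[OF adm]]) auto
  have f_p: "f i lam p = bernoulli_conv (p j) ?G i" for i
    using f_fun_upd[OF adm _ pj, of i j] q by simp
  have f_q: "f i lam (p(j := q)) = bernoulli_conv q ?G i" for i
    using f_fun_upd[OF adm q(1)] q pj by simp
  have "?G (Suc k) < ?G k"
    using strict_descent_of_bernoulli_conv[OF G _ pj] pos desc q unfolding f_p by simp
  moreover have "f (Suc k) lam p - f (Suc k) lam (p(j := q)) = (p j - q) * (?G k - ?G (Suc k))"
    unfolding f_p f_q by (simp add: bernoulli_conv_def shift_def algebra_simps)
  moreover have "0 < (p j - q) * (?G k - ?G (Suc k))"
    using calculation q by simp
  ultimately show ?thesis
    by linarith
qed

lemma f_strict_mono_params: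
  assumes adm: "admissible lam p" "admissible lam' p'"
    and le: "lam \<le> lam'" "\<And>i. p i \<le> p' i" and ne: "(lam, p) \<noteq> (lam', p')"
    and pos: "0 < f (Suc k) lam' p'" and desc: "f (Suc k) lam' p' < f k lam' p'"
  shows "f (Suc k) lam p < f (Suc k) lam' p'"
proof (cases "lam < lam'")
  case True
  have "admissible lam p'"
    using adm by (simp add: admissible_def)
  then have "f (Suc k) lam p \<le> f (Suc k) lam p'"
    by (rule f_mono_params[OF adm(1) _ adm(2) le(1) le(2) _ desc]) simp
  also have "\<dots> < f (Suc k) lam' p'"
    using adm(1) True by (intro f_strict_mono_rate[OF adm(2) _ _ pos desc]) (auto simp: admissible_def)
  finally show ?thesis .
next
  case False
  then have lam: "lam = lam'"
    using le(1) by simp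
  with ne obtain j where "p j \<noteq> p' j"
    by auto
  with le(2) have j: "p j < p' j"
    by (simp add: order.strict_iff_order)
  have "admissible lam (p'(j := p j))"
    using admissible_fun_upd[OF adm(2), of "p j"] adm lam by (simp add: admissible_def prob_seq_def)
  then have "f (Suc k) lam p \<le> f (Suc k) lam (p'(j := p j))"
    by (rule f_mono_params[OF adm(1) _ adm(2) le(1) _ _ desc]) (use le(2) j in auto)
  also have "\<dots> < f (Suc k) lam' p'"
    unfolding lam using adm(1) j
    by (intro f_strict_mono_coordinate[OF adm(2) _ _ pos desc]) (auto simp: admissible_def prob_seq_def)
  finally show ?thesis .
qed

lemma in_nabla_admissible:
  assumes "in_nabla lam p"
  shows "admissible lam p"
proof -
  have "p i \<le> p 0" for i
    using assms lift_Suc_antimono_le[of p 0 i] by (simp add: in_nabla_def)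
  then show ?thesis
    using assms by (auto simp: in_nabla_def admissible_def prob_seq_def intro: order_trans)
qed

lemma f_descends_above_lead_mode:
  assumes nabla: "in_nabla lam p" and "lead_mode lam p < Suc k" and "0 < lam + p k"
  shows "0 < f (Suc k) lam p \<and> f (Suc k) lam p < f k lam p"
proof -
  have adm: "admissible lam p"
    by (rule in_nabla_admissible[OF nabla])
  have "0 < lam \<or> (\<forall>l<Suc k. 0 < p l)"
  proof (cases "0 < lam")
    case False
    then have "0 < p k"
      using assms by (simp add: in_nabla_def)
    moreover have "p k \<le> p l" if "l < Suc k" for l
      using nabla that lift_Suc_antimono_le[of p l k] by (simp add: in_nabla_def)
    ultimately show ?thesis
      by fastforce
  qed simp
  then obtain i where "Suc k \<le> i" "0 < f i lam p"
    using f_pos_beyond[OF adm] by blast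
  with assms(2) show ?thesis
    by (intro log_concave_decreasing_above_mode[OF log_concave_f[OF adm]
        is_lead_mode_lead_mode[OF adm \<open>0 < f i lam p\<close>]]) simp_all
qed

theorem lemma2:
  fixes lam lam' :: real and p p' :: "nat \<Rightarrow> real" and k :: nat
  assumes "in_nabla lam p" and "in_nabla lam' p'"
    and "(lam, p) \<noteq> (lam', p')"
    and "lam \<le> lam'" and "\<forall>i. p i \<le> p' i"
    and "k > lead_mode lam' p'"
    and "lam' + p' (k - 1) > 0"
  shows "f k lam' p' > f k lam p"
proof -
  obtain k0 where k0: "k = Suc k0"
    using assms(6) by (cases k) auto
  have "0 < f k lam' p' \<and> f k lam' p' < f k0 lam' p'"
    using f_descends_above_lead_mode[OF assms(2), of k0] assms(6,7) k0 by simp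
  then show ?thesis
    unfolding k0 using assms(3-5)
    by (intro f_strict_mono_params in_nabla_admissible assms(1,2)) (simp_all add: k0)
qed

end
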